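(* Let $i\in J$. Let $\sigma_i$ be the permutation of $\{0,1,\dots,l\}$ such that $$t_iw_iw_0(v_0^\circ,v_1^\circ,\dots,v_l^\circ)=(v^\circ_{\sigma_i(0)},v^\circ_{\sigma_i(1)},\dots,v^\circ_{\sigma_i(l)}).$$ Then $\mathrm{sign}(\sigma_i)=(-1)^{l(w_iw_0)}$.
   Context: Setting: $G$ is the group of $K$-points of an adjoint quasi-simple group split over a non-archimedean local field $K$ (valuation $\omega$, $\omega(K^* )=\mathbb Z$), $T$ a maximal split torus, $\Phi$ its (reduced, irreducible) root system with basis $\alpha_1,\dots,\alpha_l$, $W$ the Weyl group, $V=X_*(T)\otimes\mathbb R$. $\tilde\alpha=\sum_i n_i\alpha_i$ is the highest root, $\varpi_1,\dots,\varpi_l$ the fundamental coweights, and $J=\{i: n_i=1\}$. The fundamental chamber $C_0=\{x\in V:\langle x,\alpha_j\rangle>0,\ \langle x,\tilde\alpha\rangle<1\}$ has vertices $v_0^\circ=0$ and $v_j^\circ=\varpi_j/n_j$ ($1\le j\le l$). $t_i\in T$ is an element with $\nu(t_i)=\varpi_i$, where $\nu:T\to X_*(T)$ satisfies $\langle\nu(t),\chi\rangle=-\omega(\chi(t))$; $t_i$ acts on $V$ (as affine space) by translation by $\varpi_i$ and $W$ acts linearly, so $t_iw_iw_0(x)=w_iw_0(x)+\varpi_i$. $w_0$ is the longest element of $W$ and $w_i$ the longest element of the Weyl group generated by the reflections $s_{\alpha_j}$, $j\ne i$; for $i\in J$ one has $t_iw_iw_0C_0=C_0$, so $t_iw_iw_0$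 permutes the vertices of $C_0$. $l(\cdot)$ is the length in $W$ with respect to the simple reflections. *)

theory Defs
  imports "HOL-Analysis.Analysis" "HOL-Combinatorics.Permutations"
begin

text \<open>Roots are realised as vectors in a Euclidean space V (the dual of V is identified
with V via the inner product); the pairing of x in V with a root a is x \<bullet> a.\<close>

definition rrefl :: "'a::euclidean_space \<Rightarrow> 'a \<Rightarrow> 'a" where
  "rrefl a x = x - (2 * (x \<bullet> a) / (a \<bullet> a)) *\<^sub>R a"

definition root_system :: "'a::euclidean_space set \<Rightarrow> bool" where
  "root_system \<Phi> \<longleftrightarrow> finite \<Phi> \<and> 0 \<notin> \<Phi> \<and> span \<Phi> = UNIV \<and>
     (\<forall>a\<in>\<Phi>. \<forall>b\<in>\<Phi>. rrefl a b \<in> \<Phi> \<and> 2 * (b \<bullet> a) / (a \<bullet> a) \<in> \<int>)"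

definition reduced_rs :: "'a::euclidean_space set \<Rightarrow> bool" where
  "reduced_rs \<Phi> \<longleftrightarrow> (\<forall>a\<in>\<Phi>. \<forall>c::real. c *\<^sub>R a \<in> \<Phi> \<longrightarrow> c = 1 \<or> c = -1)"

definition irreducible_rs :: "'a::euclidean_space set \<Rightarrow> bool" where
  "irreducible_rs \<Phi> \<longleftrightarrow> \<not> (\<exists>A B. A \<noteq> {} \<and> B \<noteq> {} \<and> A \<union> B = \<Phi> \<and> A \<inter> B = {} \<and>
       (\<forall>a\<in>A. \<forall>b\<in>B. a \<bullet> b = 0))"

definition rs_basis :: "'a::euclidean_space set \<Rightarrow> (nat \<Rightarrow> 'a) \<Rightarrow> nat \<Rightarrow> bool" where
  "rs_basis \<Phi> \<alpha> l \<longleftrightarrow> inj_on \<alpha> {1..l} \<and> \<alpha> ` {1..l} \<subseteq> \<Phi> \<and> independent (\<alpha> ` {1..l}) \<and>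
     (\<forall>b\<in>\<Phi>. \<exists>c::nat \<Rightarrow> int. b = (\<Sum>j=1..l. real_of_int (c j) *\<^sub>R \<alpha> j) \<and>
        ((\<forall>j\<in>{1..l}. c j \<ge> 0) \<or> (\<forall>j\<in>{1..l}. c j \<le> 0)))"

definition highest_root :: "'a::euclidean_space set \<Rightarrow> (nat \<Rightarrow> 'a) \<Rightarrow> nat \<Rightarrow> 'a \<Rightarrow> bool" where
  "highest_root \<Phi> \<alpha> l h \<longleftrightarrow> h \<in> \<Phi> \<and>
     (\<forall>b\<in>\<Phi>. \<exists>c::nat \<Rightarrow> nat. h - b = (\<Sum>j=1..l. real (c j) *\<^sub>R \<alpha> j))"

definition refl_word :: "(nat \<Rightarrow> 'a::euclidean_space) \<Rightarrow> nat list \<Rightarrow> 'a \<Rightarrow> 'a" where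
  "refl_word \<alpha> ws = foldr (\<lambda>j f. rrefl (\<alpha> j) \<circ> f) ws id"

definition parabolic :: "(nat \<Rightarrow> 'a::euclidean_space) \<Rightarrow> nat set \<Rightarrow> ('a \<Rightarrow> 'a) set" where
  "parabolic \<alpha> I = {refl_word \<alpha> ws | ws. set ws \<subseteq> I}"

definition word_length :: "(nat \<Rightarrow> 'a::euclidean_space) \<Rightarrow> nat set \<Rightarrow> ('a \<Rightarrow> 'a) \<Rightarrow> nat" where
  "word_length \<alpha> I w = (LEAST k. \<exists>ws. length ws = k \<and> set ws \<subseteq> I \<and> refl_word \<alpha> ws = w)"

inductive_set weyl_group :: "'a::euclidean_space set \<Rightarrow> ('a \<Rightarrow> 'a) set" for \<Phi> where
  weyl_id: "id \<in> weyl_group \<Phi>"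
| weyl_step: "w \<in> weyl_group \<Phi> \<Longrightarrow> a \<in> \<Phi> \<Longrightarrow> rrefl a \<circ> w \<in> weyl_group \<Phi>"

definition longest_in :: "('a \<Rightarrow> nat) \<Rightarrow> 'a set \<Rightarrow> 'a \<Rightarrow> bool" where
  "longest_in len S w \<longleftrightarrow> w \<in> S \<and> (\<forall>u\<in>S. len u \<le> len w)"

end

theory Submission
  imports Defs "Jordan_Normal_Form.Determinant"
begin

no_notation scalar_prod (infix \<open>\<bullet>\<close> 70) and vec_nth (infixl \<open>$\<close> 90)

text \<open>The vertices \<open>v\<^sub>0, \<dots>, v\<^sub>l\<close> of the chamber are affinely independent, so their
homogeneous coordinates form an invertible matrix \<open>B\<close>. The affine map \<open>x \<mapsto> W x + t\<close> with
\<open>W = w\<^sub>i w\<^sub>0\<close> permutes them by \<open>\<sigma>\<^sub>i\<close>; in homogeneous coordinates this reads \<open>B G = P\<^sub>\<sigma> B\<close>,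
where \<open>G\<close> is block triangular with diagonal blocks \<open>1\<close> and the matrix of \<open>W\<close>. Taking determinants,
\<open>sign \<sigma>\<^sub>i = det W\<close>. Finally every element of the Weyl group is a word in simple reflections,
and each reflection has determinant \<open>-1\<close>, so \<open>det W = (-1)\<^bsup>l(W)\<^esup>\<close>.\<close>

lemma det_one_minus_rank_one:
  fixes u w :: "nat \<Rightarrow> real"
  shows "det (1\<^sub>m n - mat n n (\<lambda>(r,c). u r * w c)) = 1 - (\<Sum>k<n. w k * u k)"
proof -
  define U where "U = mat n 1 (\<lambda>(r,_). u r)"
  define Wr where "Wr = mat 1 n (\<lambda>(_,c). w c)"
  define P where "P = mat n n (\<lambda>(r,c). u r * w c)"
  define s where "s = (\<Sum>k<n. w k * u k)"
  define X where "X = four_block_mat (1\<^sub>m 1) Wr U (1\<^sub>m n)"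
  define L where "L = four_block_mat (1\<^sub>m 1) (0\<^sub>m 1 n) U (1\<^sub>m n)"
  define R where "R = four_block_mat (1\<^sub>m 1) Wr (0\<^sub>m n 1) (1\<^sub>m n - P)"
  define L' where "L' = four_block_mat (mat 1 1 (\<lambda>_. 1 - s)) Wr (0\<^sub>m n 1) (1\<^sub>m n)"
  have cU: "U \<in> carrier_mat n 1" and cW: "Wr \<in> carrier_mat 1 n" and cP: "P \<in> carrier_mat n n"
    by (auto simp: U_def Wr_def P_def)
  \<comment> \<open>\<open>X\<close> factors in two ways, \<open>L R\<close> and \<open>L' L\<close>, which gives \<open>det (1 - P) = 1 - s\<close>.\<close>
  have "L * R = four_block_mat (1\<^sub>m 1 * 1\<^sub>m 1 + 0\<^sub>m 1 n * 0\<^sub>m n 1) (1\<^sub>m 1 * Wr + 0\<^sub>m 1 n * (1\<^sub>m n - P))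
     (U * 1\<^sub>m 1 + 1\<^sub>m n * 0\<^sub>m n 1) (U * Wr + 1\<^sub>m n * (1\<^sub>m n - P))"
    unfolding L_def R_def using cU cW cP by (intro mult_four_block_mat) auto
  also have "\<dots> = X" unfolding X_def
  proof (rule cong_four_block_mat)
    show "1\<^sub>m 1 * 1\<^sub>m 1 + 0\<^sub>m 1 n * 0\<^sub>m n 1 = (1\<^sub>m 1 :: real mat)"
      by (rule eq_matI) (auto simp: scalar_prod_def)
    show "1\<^sub>m 1 * Wr + 0\<^sub>m 1 n * (1\<^sub>m n - P) = Wr"
      using cW cP by (intro eq_matI) (auto simp: scalar_prod_def)
    show "U * 1\<^sub>m 1 + 1\<^sub>m n * 0\<^sub>m n 1 = U"
      using cU by (intro eq_matI) (auto simp: scalar_prod_def)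
    show "U * Wr + 1\<^sub>m n * (1\<^sub>m n - P) = 1\<^sub>m n"
      using cU cW cP by (intro eq_matI) (auto simp: scalar_prod_def U_def Wr_def P_def)
  qed
  finally have LR: "L * R = X" .
  have "L' * L = four_block_mat (mat 1 1 (\<lambda>_. 1 - s) * 1\<^sub>m 1 + Wr * U) (mat 1 1 (\<lambda>_. 1 - s) * 0\<^sub>m 1 n + Wr * 1\<^sub>m n)
     (0\<^sub>m n 1 * 1\<^sub>m 1 + 1\<^sub>m n * U) (0\<^sub>m n 1 * 0\<^sub>m 1 n + 1\<^sub>m n * 1\<^sub>m n)"
    unfolding L'_def L_def using cU cW by (intro mult_four_block_mat) auto
  also have "\<dots> = X" unfolding X_def
  proof (rule cong_four_block_mat)
    show "mat 1 1 (\<lambda>_. 1 - s) * 1\<^sub>m 1 + Wr * U = 1\<^sub>m 1"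
      using cU cW by (intro eq_matI) (auto simp: scalar_prod_def U_def Wr_def s_def atLeast0LessThan)
    show "mat 1 1 (\<lambda>_. 1 - s) * 0\<^sub>m 1 n + Wr * 1\<^sub>m n = Wr"
      using cW by (intro eq_matI) (auto simp: scalar_prod_def)
    show "0\<^sub>m n 1 * 1\<^sub>m 1 + 1\<^sub>m n * U = U"
      using cU by (intro eq_matI) (auto simp: scalar_prod_def)
    show "0\<^sub>m n 1 * 0\<^sub>m 1 n + 1\<^sub>m n * 1\<^sub>m n = (1\<^sub>m n :: real mat)"
      by (intro eq_matI) (auto simp: scalar_prod_def)
  qed
  finally have L'L: "L' * L = X" .
  have cL: "L \<in> carrier_mat (1+n) (1+n)" and cR: "R \<in> carrier_mat (1+n) (1+n)"
    and cL': "L' \<in> carrier_mat (1+n) (1+n)"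
    using cU cW cP by (auto simp: L_def R_def L'_def)
  have dL: "det L = 1" unfolding L_def
    using det_four_block_mat_upper_right_zero[of "1\<^sub>m 1" 1 "0\<^sub>m 1 n" n U "1\<^sub>m n"] cU by simp
  have dR: "det R = det (1\<^sub>m n - P)" unfolding R_def
    using det_four_block_mat_lower_left_zero[of "1\<^sub>m 1" 1 Wr n "0\<^sub>m n 1" "1\<^sub>m n - P"] cW cP
    by (simp add: minus_carrier_mat)
  have dL': "det L' = 1 - s" unfolding L'_def
    using det_four_block_mat_lower_left_zero[of "mat 1 1 (\<lambda>_. 1 - s)" 1 Wr n "0\<^sub>m n 1" "1\<^sub>m n"] cW
    by (simp add: det_single)
  have "det X = det (1\<^sub>m n - P)" using det_mult[OF cL cR] LR dL dR by simp
  moreover have "det X = 1 - s" using det_mult[OF cL' cL] L'L dL' dL by simp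
  ultimately show ?thesis by (simp add: P_def s_def)
qed

lemma linear_rrefl: "linear (rrefl a)"
  unfolding rrefl_def
  by (rule linearI) (auto simp: inner_add_left algebra_simps add_divide_distrib)

lemma rrefl_rrefl: "a \<noteq> 0 \<Longrightarrow> rrefl a (rrefl a x) = x"
  by (simp add: rrefl_def inner_diff_left algebra_simps)

lemma inner_rrefl_rrefl:
  assumes a: "a \<noteq> 0"
  shows "rrefl a x \<bullet> rrefl a y = x \<bullet> y"
proof -
  define s where "s = 2 * (x \<bullet> a) / (a \<bullet> a)"
  define t where "t = 2 * (y \<bullet> a) / (a \<bullet> a)"
  have "rrefl a x \<bullet> rrefl a y = (x - s *\<^sub>R a) \<bullet> (y - t *\<^sub>R a)"
    by (simp add: rrefl_def s_def t_def)
  also have "\<dots> = x \<bullet> y - t * (x \<bullet> a) - s * (a \<bullet> y) + s * t * (a \<bullet> a)"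
    by (simp add: inner_diff_left inner_diff_right algebra_simps)
  also have "\<dots> = x \<bullet> y" using a
    by (simp add: s_def t_def inner_commute[of a y] field_simps)
  finally show ?thesis .
qed

lemma rrefl_rrefl_conj:
  assumes a: "a \<noteq> 0"
  shows "rrefl (rrefl a b) = rrefl a \<circ> rrefl b \<circ> rrefl a"
proof
  fix x
  let ?g = "rrefl a"
  have lg: "linear ?g" by (rule linear_rrefl)
  have 1: "x \<bullet> ?g b = ?g x \<bullet> b"
    using inner_rrefl_rrefl[OF a, of "?g x" b] rrefl_rrefl[OF a] by simp
  have 2: "?g b \<bullet> ?g b = b \<bullet> b" by (rule inner_rrefl_rrefl[OF a])
  have "(?g \<circ> rrefl b \<circ> ?g) x = ?g (?g x - (2 * (?g x \<bullet> b) / (b \<bullet> b)) *\<^sub>R b)"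
    by (simp only: comp_apply rrefl_def[of b])
  also have "\<dots> = x - (2 * (?g x \<bullet> b) / (b \<bullet> b)) *\<^sub>R ?g b"
    by (simp only: linear_diff[OF lg] linear_scale[OF lg] rrefl_rrefl[OF a])
  also have "\<dots> = rrefl (?g b) x" by (simp only: rrefl_def[of "?g b" x] 1 2)
  finally show "rrefl (?g b) x = (?g \<circ> rrefl b \<circ> ?g) x" by simp
qed

lemma rrefl_uminus: "rrefl (- a) = rrefl a"
  by (rule ext) (simp add: rrefl_def)

lemma rrefl_self: "a \<noteq> 0 \<Longrightarrow> rrefl a a = - a"
  by (simp add: rrefl_def algebra_simps scaleR_2)

lemma refl_word_Nil: "refl_word \<alpha> [] = id"
  by (simp add: refl_word_def)

lemma refl_word_Cons: "refl_word \<alpha> (j # ws) = rrefl (\<alpha> j) \<circ> refl_word \<alpha> ws"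
  by (simp add: refl_word_def)

lemma refl_word_append: "refl_word \<alpha> (xs @ ys) = refl_word \<alpha> xs \<circ> refl_word \<alpha> ys"
  by (induction xs) (auto simp: refl_word_def)

lemma linear_refl_word: "linear (refl_word \<alpha> ws)"
  by (induction ws)
    (auto simp: refl_word_def linear_rrefl intro: linear_compose[unfolded o_def] linear_id[unfolded id_def])

lemma id_in_parabolic: "id \<in> parabolic \<alpha> I"
  unfolding parabolic_def by (auto intro!: exI[of _ "[]"] simp: refl_word_Nil)

lemma rrefl_in_parabolic: "j \<in> I \<Longrightarrow> rrefl (\<alpha> j) \<in> parabolic \<alpha> I"
  unfolding parabolic_def by (auto intro!: exI[of _ "[j]"] simp: refl_word_def)

lemma parabolic_comp:
  assumes "f \<in> parabolic \<alpha> I" "g \<in> parabolic \<alpha> I"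
  shows "f \<circ> g \<in> parabolic \<alpha> I"
proof -
  obtain xs ys where "set xs \<subseteq> I" "f = refl_word \<alpha> xs" "set ys \<subseteq> I" "g = refl_word \<alpha> ys"
    using assms unfolding parabolic_def by blast
  then have "set (xs @ ys) \<subseteq> I" "f \<circ> g = refl_word \<alpha> (xs @ ys)"
    by (simp_all add: refl_word_append)
  then show ?thesis unfolding parabolic_def by blast
qed

lemma parabolic_mono: "I \<subseteq> J \<Longrightarrow> parabolic \<alpha> I \<subseteq> parabolic \<alpha> J"
  unfolding parabolic_def by blast

lemma linear_parabolic: "w \<in> parabolic \<alpha> I \<Longrightarrow> linear w"
  unfolding parabolic_def using linear_refl_word by blast

lemma word_length_attained:
  assumes "w \<in> parabolic \<alpha> I"
  shows "\<exists>ws. length ws = word_length \<alpha> I w \<and> set ws \<subseteq> I \<and> refl_word \<alpha> ws = w"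
proof -
  from assms obtain ws where "set ws \<subseteq> I" "refl_word \<alpha> ws = w"
    unfolding parabolic_def by blast
  then have "\<exists>k ws. length ws = k \<and> set ws \<subseteq> I \<and> refl_word \<alpha> ws = w" by blast
  from LeastI_ex[OF this] show ?thesis unfolding word_length_def .
qed

subsection \<open>The Weyl group is generated by the simple reflections\<close>

lemma rs_basis_coeffs_unique:
  fixes \<alpha> :: "nat \<Rightarrow> 'a::euclidean_space"
  assumes basis: "rs_basis \<Phi> \<alpha> l"
    and eq: "(\<Sum>j=1..l. c j *\<^sub>R \<alpha> j) = (\<Sum>j=1..l. d j *\<^sub>R \<alpha> j)"
    and j: "j \<in> {1..l}"
  shows "c j = d j"
proof -
  have inj: "inj_on \<alpha> {1..l}" and ind: "independent (\<alpha> ` {1..l})"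
    using basis by (auto simp: rs_basis_def)
  define u where "u x = c (the_inv_into {1..l} \<alpha> x) - d (the_inv_into {1..l} \<alpha> x)" for x
  have "(\<Sum>x\<in>\<alpha> ` {1..l}. u x *\<^sub>R x) = (\<Sum>k=1..l. u (\<alpha> k) *\<^sub>R \<alpha> k)"
    using sum.reindex[OF inj, of "\<lambda>x. u x *\<^sub>R x"] by simp
  also have "\<dots> = (\<Sum>k=1..l. (c k - d k) *\<^sub>R \<alpha> k)"
  proof (rule sum.cong)
    fix k assume "k \<in> {1..l}"
    from the_inv_into_f_f[OF inj this]
    show "u (\<alpha> k) *\<^sub>R \<alpha> k = (c k - d k) *\<^sub>R \<alpha> k" by (simp add: u_def)
  qed simp
  also have "\<dots> = 0" using eq by (simp add: scaleR_diff_left sum_subtractf)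
  finally have "u (\<alpha> j) = 0"
    using independentD[OF ind, of "\<alpha> ` {1..l}" u "\<alpha> j"] j by auto
  moreover have "the_inv_into {1..l} \<alpha> (\<alpha> j) = j" by (rule the_inv_into_f_f[OF inj j])
  ultimately show ?thesis by (simp add: u_def)
qed

lemma simple_root_nonzero:
  assumes "root_system \<Phi>" "rs_basis \<Phi> \<alpha> l" "j \<in> {1..l}"
  shows "\<alpha> j \<noteq> 0"
proof -
  have "\<alpha> j \<in> \<Phi>" using assms(2,3) unfolding rs_basis_def by blast
  moreover have "0 \<notin> \<Phi>" using assms(1) unfolding root_system_def by blast
  ultimately show ?thesis by auto
qed

text \<open>Only the coefficient of \<open>\<alpha>\<^sub>j\<close> changes, and it drops by a positive integer; the
untouched positive coefficient \<open>c\<^sub>k\<close> forces the image to be a positive root.\<close>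
lemma rrefl_simple_lowers_height:
  fixes \<alpha> :: "nat \<Rightarrow> 'a::euclidean_space"
  assumes rs: "root_system \<Phi>" and basis: "rs_basis \<Phi> \<alpha> l"
    and bP: "b \<in> \<Phi>" and bc: "b = (\<Sum>i=1..l. real_of_int (c i) *\<^sub>R \<alpha> i)"
    and j: "j \<in> {1..l}" and ajb: "\<alpha> j \<bullet> b > 0"
    and k: "k \<in> {1..l}" "k \<noteq> j" "c k > 0"
  shows "\<exists>c'. rrefl (\<alpha> j) b = (\<Sum>i=1..l. real_of_int (c' i) *\<^sub>R \<alpha> i)
    \<and> (\<forall>i\<in>{1..l}. c' i \<ge> 0) \<and> (\<Sum>i=1..l. c' i) < (\<Sum>i=1..l. c i)"
proof -
  have aP: "\<alpha> j \<in> \<Phi>" using basis j by (auto simp: rs_basis_def)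
  define b' where "b' = rrefl (\<alpha> j) b"
  have b'P: "b' \<in> \<Phi>" using rs aP bP by (auto simp: root_system_def b'_def)
  have "2 * (b \<bullet> \<alpha> j) / (\<alpha> j \<bullet> \<alpha> j) \<in> \<int>"
    using rs aP bP by (auto simp: root_system_def)
  then obtain m where m: "2 * (b \<bullet> \<alpha> j) / (\<alpha> j \<bullet> \<alpha> j) = real_of_int m"
    by (auto elim: Ints_cases)
  have "2 * (b \<bullet> \<alpha> j) / (\<alpha> j \<bullet> \<alpha> j) > 0"
    using ajb simple_root_nonzero[OF rs basis j] by (simp add: inner_commute)
  then have mpos: "m > 0" using m by simp
  define c' where "c' = c(j := c j - m)"
  have "(\<Sum>i=1..l. real_of_int (c' i) *\<^sub>R \<alpha> i)
      = (\<Sum>i=1..l. real_of_int (c i) *\<^sub>R \<alpha> i - (if i = j then real_of_int m *\<^sub>R \<alpha> j else 0))"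
    by (rule sum.cong) (auto simp: c'_def scaleR_diff_left)
  also have "\<dots> = b - real_of_int m *\<^sub>R \<alpha> j"
    using j by (simp add: sum_subtractf bc)
  also have "\<dots> = b'" by (simp add: b'_def rrefl_def m)
  finally have b'c: "b' = (\<Sum>i=1..l. real_of_int (c' i) *\<^sub>R \<alpha> i)" ..
  obtain d where d: "b' = (\<Sum>i=1..l. real_of_int (d i) *\<^sub>R \<alpha> i)"
    and dsgn: "(\<forall>i\<in>{1..l}. d i \<ge> 0) \<or> (\<forall>i\<in>{1..l}. d i \<le> 0)"
    using basis b'P unfolding rs_basis_def by blast
  have dc: "d i = c' i" if "i \<in> {1..l}" for i
    using rs_basis_coeffs_unique[OF basis _ that, of "\<lambda>i. real_of_int (d i)" "\<lambda>i. real_of_int (c' i)"]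
      d b'c by simp
  have "d k > 0" using dc[OF k(1)] k by (simp add: c'_def)
  then have c'pos: "\<forall>i\<in>{1..l}. c' i \<ge> 0" using dsgn dc k(1) by force
  have "(\<Sum>i=1..l. c' i) = (\<Sum>i=1..l. c i - (if i = j then m else 0))"
    by (rule sum.cong) (auto simp: c'_def)
  also have "\<dots> = (\<Sum>i=1..l. c i) - m" using j by (simp add: sum_subtractf)
  finally have "(\<Sum>i=1..l. c' i) < (\<Sum>i=1..l. c i)" using mpos by simp
  with b'c c'pos show ?thesis unfolding b'_def by blast
qed

text \<open>Induction on the height; for a positive root \<open>b\<close> some simple root has \<open>\<langle>b, \<alpha>\<^sub>j\<rangle> > 0\<close>,
and \<open>s\<^sub>b = s\<^sub>j s\<^bsub>s\<^sub>j b\<^esub> s\<^sub>j\<close>.\<close>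
lemma positive_root_rrefl_in_parabolic:
  fixes \<alpha> :: "nat \<Rightarrow> 'a::euclidean_space"
  assumes rs: "root_system \<Phi>" and red: "reduced_rs \<Phi>" and basis: "rs_basis \<Phi> \<alpha> l"
  shows "b \<in> \<Phi> \<Longrightarrow> b = (\<Sum>j=1..l. real_of_int (c j) *\<^sub>R \<alpha> j) \<Longrightarrow> \<forall>j\<in>{1..l}. c j \<ge> 0
    \<Longrightarrow> rrefl b \<in> parabolic \<alpha> {1..l}"
proof (induction "nat (\<Sum>j=1..l. c j)" arbitrary: b c rule: less_induct)
  case less
  note bP = less.prems(1) and bc = less.prems(2) and cpos = less.prems(3)
  have "b \<noteq> 0" using bP rs by (auto simp: root_system_def)
  then have "0 < b \<bullet> b" by simp
  also have "b \<bullet> b = (\<Sum>j=1..l. real_of_int (c j) * (\<alpha> j \<bullet> b))"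
    by (subst (1) bc) (simp add: inner_sum_left)
  finally obtain j where j: "j \<in> {1..l}" and pj: "real_of_int (c j) * (\<alpha> j \<bullet> b) > 0"
    by (metis (no_types, lifting) not_less sum_nonpos)
  moreover have "c j \<ge> 0" using cpos j by blast
  ultimately have cj: "c j > 0" and ajb: "\<alpha> j \<bullet> b > 0"
    by (auto simp: zero_less_mult_iff)
  have sj: "rrefl (\<alpha> j) \<in> parabolic \<alpha> {1..l}" by (rule rrefl_in_parabolic[OF j])
  show ?case
  proof (cases "\<forall>k\<in>{1..l}-{j}. c k = 0")
    case True
    have "b = (\<Sum>k\<in>{1..l}. (if k = j then real_of_int (c j) *\<^sub>R \<alpha> j else 0))"
      by (subst bc, rule sum.cong) (use True in auto)
    then have bj: "b = real_of_int (c j) *\<^sub>R \<alpha> j" using j by simp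
    moreover have "\<alpha> j \<in> \<Phi>" using basis j by (auto simp: rs_basis_def)
    ultimately have "real_of_int (c j) = 1 \<or> real_of_int (c j) = -1"
      using red bP by (auto simp: reduced_rs_def)
    then have "b = \<alpha> j" using bj cj by auto
    then show ?thesis using sj by simp
  next
    case False
    then obtain k where k: "k \<in> {1..l}" "k \<noteq> j" "c k > 0" using cpos by force
    obtain c' where b'c: "rrefl (\<alpha> j) b = (\<Sum>i=1..l. real_of_int (c' i) *\<^sub>R \<alpha> i)"
      and c'pos: "\<forall>i\<in>{1..l}. c' i \<ge> 0" and lower: "(\<Sum>i=1..l. c' i) < (\<Sum>i=1..l. c i)"
      using rrefl_simple_lowers_height[OF rs basis bP bc j ajb k] by blast
    have "\<alpha> j \<in> \<Phi>" using basis j by (auto simp: rs_basis_def)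
    then have "rrefl (\<alpha> j) b \<in> \<Phi>" using rs bP by (simp add: root_system_def)
    moreover have "nat (\<Sum>i=1..l. c' i) < nat (\<Sum>i=1..l. c i)"
      using lower sum_nonneg[of "{1..l}" c'] c'pos by simp
    ultimately have "rrefl (rrefl (\<alpha> j) b) \<in> parabolic \<alpha> {1..l}"
      using less.hyps b'c c'pos by blast
    moreover have "rrefl b = rrefl (\<alpha> j) \<circ> rrefl (rrefl (\<alpha> j) b) \<circ> rrefl (\<alpha> j)"
      using rrefl_rrefl_conj[OF simple_root_nonzero[OF rs basis j], of "rrefl (\<alpha> j) b"]
      by (simp add: rrefl_rrefl[OF simple_root_nonzero[OF rs basis j]])
    ultimately show ?thesis using parabolic_comp[OF parabolic_comp[OF sj] sj] by simp
  qed
qed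

lemma root_rrefl_in_parabolic:
  fixes \<alpha> :: "nat \<Rightarrow> 'a::euclidean_space"
  assumes rs: "root_system \<Phi>" and red: "reduced_rs \<Phi>" and basis: "rs_basis \<Phi> \<alpha> l"
    and bP: "b \<in> \<Phi>"
  shows "rrefl b \<in> parabolic \<alpha> {1..l}"
proof -
  obtain c where c: "b = (\<Sum>j=1..l. real_of_int (c j) *\<^sub>R \<alpha> j)"
    and sg: "(\<forall>j\<in>{1..l}. c j \<ge> 0) \<or> (\<forall>j\<in>{1..l}. c j \<le> 0)"
    using basis bP unfolding rs_basis_def by blast
  from sg show ?thesis
  proof
    assume "\<forall>j\<in>{1..l}. c j \<ge> 0"
    then show ?thesis using positive_root_rrefl_in_parabolic[OF rs red basis bP c] by blast
  next
    assume neg: "\<forall>j\<in>{1..l}. c j \<le> 0"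
    have "b \<noteq> 0" using bP rs by (auto simp: root_system_def)
    then have "- b \<in> \<Phi>" using rs bP rrefl_self by (metis root_system_def)
    moreover have "- b = (\<Sum>j=1..l. real_of_int (- c j) *\<^sub>R \<alpha> j)"
      by (simp add: c sum_negf)
    ultimately have "rrefl (- b) \<in> parabolic \<alpha> {1..l}"
      using positive_root_rrefl_in_parabolic[OF rs red basis, of "-b" "\<lambda>j. - c j"] neg by auto
    then show ?thesis by (simp add: rrefl_uminus)
  qed
qed

lemma weyl_group_subset_parabolic:
  assumes "root_system \<Phi>" "reduced_rs \<Phi>" "rs_basis \<Phi> \<alpha> l"
  shows "weyl_group \<Phi> \<subseteq> parabolic \<alpha> {1..l}"
proof
  fix w assume "w \<in> weyl_group \<Phi>"
  then show "w \<in> parabolic \<alpha> {1..l}"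
  proof induction
    case weyl_id
    show ?case by (rule id_in_parabolic)
  next
    case (weyl_step w a)
    then show ?case using parabolic_comp root_rrefl_in_parabolic[OF assms] by blast
  qed
qed

lemma highest_root_coeff_nonzero:
  fixes \<alpha> :: "nat \<Rightarrow> 'a::euclidean_space"
  assumes basis: "rs_basis \<Phi> \<alpha> l" and hr: "highest_root \<Phi> \<alpha> l h"
    and hn: "h = (\<Sum>j=1..l. real (n j) *\<^sub>R \<alpha> j)" and k: "k \<in> {1..l}"
  shows "n k \<noteq> 0"
proof -
  have "\<alpha> k \<in> \<Phi>" using basis k by (auto simp: rs_basis_def)
  then obtain c :: "nat \<Rightarrow> nat" where c: "h - \<alpha> k = (\<Sum>j=1..l. real (c j) *\<^sub>R \<alpha> j)"
    using hr unfolding highest_root_def by blast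
  have "(\<Sum>j=1..l. real (c j + (if j = k then 1 else 0)) *\<^sub>R \<alpha> j)
      = (\<Sum>j=1..l. real (c j) *\<^sub>R \<alpha> j + (if j = k then \<alpha> k else 0))"
    by (rule sum.cong) (auto simp: scaleR_add_left)
  also have "\<dots> = (h - \<alpha> k) + \<alpha> k" using k by (simp add: sum.distrib c)
  also have "\<dots> = h" by simp
  finally have "(\<Sum>j=1..l. real (n j) *\<^sub>R \<alpha> j) = (\<Sum>j=1..l. real (c j + (if j = k then 1 else 0)) *\<^sub>R \<alpha> j)"
    using hn by simp
  from rs_basis_coeffs_unique[OF basis this k] show ?thesis by simp
qed

subsection \<open>Matrices of linear maps\<close>

definition lin_mat :: "'a::euclidean_space list \<Rightarrow> ('a \<Rightarrow> 'a) \<Rightarrow> real mat" where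
  "lin_mat bs g = mat (length bs) (length bs) (\<lambda>(r,c). g (bs!r) \<bullet> bs!c)"

lemma lin_mat_carrier: "lin_mat bs g \<in> carrier_mat (length bs) (length bs)"
  by (simp add: lin_mat_def)

context
  fixes bs :: "'a::euclidean_space list"
  assumes bs_distinct: "distinct bs" and bs_Basis: "set bs = Basis"
begin

lemma sum_Basis_eq_sum_nth: "(\<Sum>b\<in>Basis. f b) = (\<Sum>k<length bs. f (bs!k))"
  using sum_list_distinct_conv_sum_set[OF bs_distinct, of f] bs_Basis
  by (simp add: sum_list_sum_nth atLeast0LessThan)

lemma euclidean_representation_nth: "(\<Sum>k<length bs. (x \<bullet> bs!k) *\<^sub>R bs!k) = x"
  using euclidean_representation[of x] sum_Basis_eq_sum_nth[of "\<lambda>b. (x \<bullet> b) *\<^sub>R b"] by simp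

lemma inner_eq_sum_nth: "x \<bullet> y = (\<Sum>k<length bs. (x \<bullet> bs!k) * (y \<bullet> bs!k))"
  using euclidean_inner[of x y] sum_Basis_eq_sum_nth[of "\<lambda>b. (x \<bullet> b) * (y \<bullet> b)"] by simp

lemma inner_nth_nth:
  assumes "r < length bs" "c < length bs"
  shows "bs!r \<bullet> bs!c = (if r = c then 1 else 0)"
proof -
  have "bs!r \<in> Basis" "bs!c \<in> Basis" using assms bs_Basis nth_mem by blast+
  moreover have "bs!r = bs!c \<longleftrightarrow> r = c" using bs_distinct assms nth_eq_iff_index_eq by blast
  ultimately show ?thesis by (simp add: inner_Basis)
qed

lemma inner_linear_eq_sum_nth:
  assumes "linear g"
  shows "g x \<bullet> y = (\<Sum>k<length bs. (x \<bullet> bs!k) * (g (bs!k) \<bullet> y))"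
proof -
  have "g x \<bullet> y = g (\<Sum>k<length bs. (x \<bullet> bs!k) *\<^sub>R bs!k) \<bullet> y"
    by (simp only: euclidean_representation_nth)
  also have "\<dots> = (\<Sum>k<length bs. (x \<bullet> bs!k) * (g (bs!k) \<bullet> y))"
    by (simp add: linear_sum[OF assms] linear_scale[OF assms] inner_sum_left)
  finally show ?thesis .
qed

lemma lin_mat_comp:
  assumes "linear g"
  shows "lin_mat bs (g \<circ> h) = lin_mat bs h * lin_mat bs g"
proof (rule eq_matI)
  fix r c assume "r < dim_row (lin_mat bs h * lin_mat bs g)" "c < dim_col (lin_mat bs h * lin_mat bs g)"
  then show "lin_mat bs (g \<circ> h) $$ (r,c) = (lin_mat bs h * lin_mat bs g) $$ (r,c)"
    using inner_linear_eq_sum_nth[OF assms, of "h (bs!r)" "bs!c"]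
    by (simp add: lin_mat_def scalar_prod_def atLeast0LessThan)
qed (simp_all add: lin_mat_def)

lemma lin_mat_id: "lin_mat bs id = 1\<^sub>m (length bs)"
  by (rule eq_matI) (auto simp: lin_mat_def inner_nth_nth)

lemma det_lin_mat_rrefl:
  assumes a: "a \<noteq> 0"
  shows "det (lin_mat bs (rrefl a)) = -1"
proof -
  let ?n = "length bs"
  define u where "u r = 2 * (bs!r \<bullet> a) / (a \<bullet> a)" for r
  define w where "w c = a \<bullet> bs!c" for c
  have "lin_mat bs (rrefl a) = 1\<^sub>m ?n - mat ?n ?n (\<lambda>(r,c). u r * w c)"
    by (rule eq_matI) (auto simp: lin_mat_def rrefl_def u_def w_def inner_diff_left inner_nth_nth)
  then have "det (lin_mat bs (rrefl a)) = 1 - (\<Sum>k<?n. w k * u k)"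
    by (simp add: det_one_minus_rank_one)
  also have "(\<Sum>k<?n. w k * u k) = 2 * (\<Sum>k<?n. (a \<bullet> bs!k) * (a \<bullet> bs!k)) / (a \<bullet> a)"
    by (simp add: u_def w_def sum_divide_distrib sum_distrib_left inner_commute mult_ac)
  also have "\<dots> = 2" using a by (simp flip: inner_eq_sum_nth)
  finally show ?thesis by simp
qed

lemma det_lin_mat_refl_word:
  assumes "\<forall>j\<in>set ws. \<alpha> j \<noteq> 0"
  shows "det (lin_mat bs (refl_word \<alpha> ws)) = (-1) ^ length ws"
  using assms
proof (induction ws)
  case Nil
  have "lin_mat bs (refl_word \<alpha> []) = 1\<^sub>m (length bs)"
    by (simp only: refl_word_Nil lin_mat_id)
  then show ?case by simp
next
  case (Cons j ws)
  have "det (lin_mat bs (refl_word \<alpha> (j # ws)))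
      = det (lin_mat bs (refl_word \<alpha> ws)) * det (lin_mat bs (rrefl (\<alpha> j)))"
    by (simp add: refl_word_Cons lin_mat_comp linear_rrefl det_mult[OF lin_mat_carrier lin_mat_carrier])
  then show ?case using Cons det_lin_mat_rrefl by simp
qed

lemma det_lin_mat_word_length:
  assumes "w \<in> parabolic \<alpha> I" "\<forall>j\<in>I. \<alpha> j \<noteq> 0"
  shows "det (lin_mat bs w) = (-1) ^ word_length \<alpha> I w"
proof -
  obtain ws where ws: "length ws = word_length \<alpha> I w" "set ws \<subseteq> I" "refl_word \<alpha> ws = w"
    using word_length_attained[OF assms(1)] by blast
  then have "\<forall>j\<in>set ws. \<alpha> j \<noteq> 0" using assms(2) by blast
  from det_lin_mat_refl_word[OF this] show ?thesis unfolding ws .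
qed

subsection \<open>Affine permutations of a simplex\<close>

definition vertex_mat :: "(nat \<Rightarrow> 'a) \<Rightarrow> real mat" where
  "vertex_mat v = mat (Suc (length bs)) (Suc (length bs))
     (\<lambda>(c,j). if j = 0 then 1 else v c \<bullet> bs!(j-1))"

text \<open>The matrix of \<open>x \<mapsto> W x + t\<close> acting on row vectors in homogeneous coordinates.\<close>
definition affine_mat :: "('a \<Rightarrow> 'a) \<Rightarrow> 'a \<Rightarrow> real mat" where
  "affine_mat W t = four_block_mat (1\<^sub>m 1) (mat 1 (length bs) (\<lambda>(_,j). t \<bullet> bs!j))
     (0\<^sub>m (length bs) 1) (lin_mat bs W)"

lemma vertex_mat_carrier: "vertex_mat v \<in> carrier_mat (Suc (length bs)) (Suc (length bs))"
  by (simp add: vertex_mat_def)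

lemma affine_mat_carrier: "affine_mat W t \<in> carrier_mat (Suc (length bs)) (Suc (length bs))"
  using four_block_carrier_mat[OF one_carrier_mat lin_mat_carrier, of 1 _ _ bs W]
  by (simp add: affine_mat_def)

lemma det_affine_mat: "det (affine_mat W t) = det (lin_mat bs W)"
  using det_four_block_mat_lower_left_zero[OF one_carrier_mat mat_carrier refl lin_mat_carrier]
  by (simp add: affine_mat_def)

lemma affine_mat_index_0:
  "j < Suc (length bs) \<Longrightarrow> affine_mat W t $$ (0, j) = (if j = 0 then 1 else t \<bullet> bs!(j-1))"
  by (auto simp: affine_mat_def lin_mat_def four_block_mat_def)

lemma affine_mat_index_Suc:
  "j < Suc (length bs) \<Longrightarrow> k < length bs \<Longrightarrow>
    affine_mat W t $$ (Suc k, j) = (if j = 0 then 0 else W (bs!k) \<bullet> bs!(j-1))"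
  by (auto simp: affine_mat_def lin_mat_def four_block_mat_def)

lemma vertex_mat_mult_affine_mat:
  assumes W: "linear W" and \<sigma>: "\<forall>c\<le>length bs. \<sigma> c \<le> length bs"
    and Wv: "\<forall>c\<le>length bs. W (v c) + t = v (\<sigma> c)"
  shows "vertex_mat v * affine_mat W t
    = mat (Suc (length bs)) (Suc (length bs)) (\<lambda>(c,j). vertex_mat v $$ (\<sigma> c, j))"
proof (rule eq_matI)
  let ?n = "length bs"
  fix c j assume "c < dim_row (mat (Suc ?n) (Suc ?n) (\<lambda>(c,j). vertex_mat v $$ (\<sigma> c, j)))"
    and "j < dim_col (mat (Suc ?n) (Suc ?n) (\<lambda>(c,j). vertex_mat v $$ (\<sigma> c, j)))"
  then have c: "c < Suc ?n" and j: "j < Suc ?n" by auto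
  have \<sigma>c: "\<sigma> c < Suc ?n" using \<sigma> c by (simp add: less_Suc_eq_le)
  have "(vertex_mat v * affine_mat W t) $$ (c,j)
      = (\<Sum>k<Suc ?n. vertex_mat v $$ (c,k) * affine_mat W t $$ (k,j))"
    using c j vertex_mat_carrier[of v] affine_mat_carrier[of W t]
    by (simp add: scalar_prod_def lessThan_atLeast0 del: sum.lessThan_Suc)
  also have "\<dots> = affine_mat W t $$ (0,j) + (\<Sum>k<?n. (v c \<bullet> bs!k) * affine_mat W t $$ (Suc k,j))"
    unfolding sum.lessThan_Suc_shift using c by (simp add: vertex_mat_def)
  also have "\<dots> = vertex_mat v $$ (\<sigma> c, j)"
  proof (cases j)
    case 0
    then show ?thesis using c \<sigma>c by (simp add: affine_mat_index_0 affine_mat_index_Suc vertex_mat_def)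
  next
    case (Suc j')
    then have "affine_mat W t $$ (0,j) + (\<Sum>k<?n. (v c \<bullet> bs!k) * affine_mat W t $$ (Suc k,j))
        = t \<bullet> bs!j' + W (v c) \<bullet> bs!j'"
      using j inner_linear_eq_sum_nth[OF W, of "v c" "bs!j'"]
      by (simp add: affine_mat_index_0 affine_mat_index_Suc)
    also have "\<dots> = v (\<sigma> c) \<bullet> bs!j'" using Wv c by (metis add.commute inner_add_left less_Suc_eq_le)
    finally show ?thesis using Suc j \<sigma>c by (simp add: vertex_mat_def)
  qed
  finally show "(vertex_mat v * affine_mat W t) $$ (c,j)
      = mat (Suc ?n) (Suc ?n) (\<lambda>(c,j). vertex_mat v $$ (\<sigma> c, j)) $$ (c,j)"
    using c j by simp
qed (auto simp: vertex_mat_def affine_mat_def lin_mat_def)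

lemma det_vertex_mat_nonzero:
  assumes indep: "\<And>x. (\<Sum>c\<le>length bs. x c) = 0 \<Longrightarrow> (\<Sum>c\<le>length bs. x c *\<^sub>R v c) = 0
      \<Longrightarrow> \<forall>c\<le>length bs. x c = 0"
  shows "det (vertex_mat v) \<noteq> 0"
proof
  let ?N = "Suc (length bs)"
  let ?B = "vertex_mat v"
  assume "det ?B = 0"
  then have "det (transpose_mat ?B) = 0" using det_transpose[OF vertex_mat_carrier] by simp
  then obtain x where x: "x \<in> carrier_vec ?N" "x \<noteq> 0\<^sub>v ?N" "transpose_mat ?B *\<^sub>v x = 0\<^sub>v ?N"
    using det_0_iff_vec_prod_zero_field[of "transpose_mat ?B" ?N] vertex_mat_carrier by auto
  have col: "(\<Sum>c\<le>length bs. ?B $$ (c,j) * x $ c) = 0" if "j < ?N" for j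
  proof -
    have "(transpose_mat ?B *\<^sub>v x) $ j = 0" using x(3) that by simp
    then show ?thesis using that x(1) vertex_mat_carrier[of v]
      by (simp add: scalar_prod_def atLeast0LessThan lessThan_Suc_atMost)
  qed
  have "(\<Sum>c\<le>length bs. x $ c) = 0" using col[of 0] by (simp add: vertex_mat_def)
  moreover have "(\<Sum>c\<le>length bs. x $ c *\<^sub>R v c) = 0"
  proof -
    have "(\<Sum>c\<le>length bs. x $ c *\<^sub>R v c) \<bullet> bs!k = 0" if "k < length bs" for k
      using col[of "Suc k"] that by (simp add: vertex_mat_def inner_sum_left mult.commute)
    then show ?thesis using inner_eq_sum_nth[of _ "(\<Sum>c\<le>length bs. x $ c *\<^sub>R v c)"]
      by (metis (no_types, lifting) inner_eq_zero_iff mult_zero_left sum.neutral lessThan_iff)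
  qed
  ultimately have "\<forall>c\<le>length bs. x $ c = 0" by (rule indep)
  then have "x = 0\<^sub>v ?N" using x(1) by (intro eq_vecI) auto
  with x(2) show False ..
qed

lemma signof_affine_vertex_perm:
  assumes W: "linear W" and \<sigma>: "\<sigma> permutes {..length bs}"
    and Wv: "\<forall>c\<le>length bs. W (v c) + t = v (\<sigma> c)"
    and indep: "\<And>x. (\<Sum>c\<le>length bs. x c) = 0 \<Longrightarrow> (\<Sum>c\<le>length bs. x c *\<^sub>R v c) = 0
      \<Longrightarrow> \<forall>c\<le>length bs. x c = 0"
  shows "signof \<sigma> = det (lin_mat bs W)"
proof -
  have \<sigma>N: "\<sigma> permutes {0..<Suc (length bs)}"
    using \<sigma> by (simp add: atLeast0LessThan lessThan_Suc_atMost)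
  have "\<forall>c\<le>length bs. \<sigma> c \<le> length bs" using permutes_in_image[OF \<sigma>] by simp
  then have "det (vertex_mat v * affine_mat W t) = signof \<sigma> * det (vertex_mat v)"
    by (simp add: vertex_mat_mult_affine_mat[OF W _ Wv] det_permute_rows[OF vertex_mat_carrier \<sigma>N])
  moreover have "det (vertex_mat v * affine_mat W t) = det (vertex_mat v) * det (lin_mat bs W)"
    by (simp add: det_mult[OF vertex_mat_carrier affine_mat_carrier] det_affine_mat)
  ultimately show ?thesis using det_vertex_mat_nonzero[OF indep] by simp
qed

end

lemma chamber_vertices_affinely_independent:
  fixes v \<alpha> :: "nat \<Rightarrow> 'a::real_inner"
  assumes v: "\<forall>c\<le>l. \<forall>k\<in>{1..l}. v c \<bullet> \<alpha> k = (if c = k then r k else 0)"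
    and r: "\<forall>k\<in>{1..l}. r k \<noteq> 0"
    and sum0: "(\<Sum>c\<le>l. x c) = 0" and vsum0: "(\<Sum>c\<le>l. x c *\<^sub>R v c) = 0"
  shows "\<forall>c\<le>l. x c = 0"
proof -
  have pos: "x k = 0" if k: "k \<in> {1..l}" for k
  proof -
    have "0 = (\<Sum>c\<le>l. x c *\<^sub>R v c) \<bullet> \<alpha> k" using vsum0 by simp
    also have "\<dots> = (\<Sum>c\<le>l. if c = k then x k * r k else 0)"
      unfolding inner_sum_left using v k by (intro sum.cong) auto
    also have "\<dots> = x k * r k" using k by simp
    finally show ?thesis using r k by simp
  qed
  have "(\<Sum>c\<le>l. x c) = x 0 + (\<Sum>c<l. x (Suc c))" by (rule sum.atMost_shift)
  also have "(\<Sum>c<l. x (Suc c)) = 0" using pos by (intro sum.neutral) auto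
  finally have "x 0 = 0" using sum0 by simp
  with pos show ?thesis by (metis atLeastAtMost_iff less_one not_le)
qed

theorem mainTheorem4:
  fixes \<Phi> :: "'a::euclidean_space set"
    and \<alpha> :: "nat \<Rightarrow> 'a" and l :: nat and h :: 'a and n :: "nat \<Rightarrow> nat"
    and cw :: "nat \<Rightarrow> 'a" and w0 wi :: "'a \<Rightarrow> 'a" and i :: nat
    and v :: "nat \<Rightarrow> 'a" and \<sigma> :: "nat \<Rightarrow> nat"
  assumes rs: "root_system \<Phi>" and red: "reduced_rs \<Phi>" and irr: "irreducible_rs \<Phi>"
    and dim: "l = DIM('a)"
    and basis: "rs_basis \<Phi> \<alpha> l"
    and hr: "highest_root \<Phi> \<alpha> l h"
    and hn: "h = (\<Sum>j=1..l. real (n j) *\<^sub>R \<alpha> j)"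
    and cow: "\<forall>j\<in>{1..l}. \<forall>k\<in>{1..l}. cw j \<bullet> \<alpha> k = (if j = k then 1 else 0)"
    and vdef: "\<forall>k. v k = (if k = 0 then 0 else (1 / real (n k)) *\<^sub>R cw k)"
    and w0: "longest_in (word_length \<alpha> {1..l}) (weyl_group \<Phi>) w0"
    and wi: "longest_in (word_length \<alpha> ({1..l} - {i})) (parabolic \<alpha> ({1..l} - {i})) wi"
    and iJ: "i \<in> {1..l}" "n i = 1"
    and \<sigma>: "\<sigma> permutes {0..l}"
    and \<sigma>v: "\<forall>k\<in>{0..l}. wi (w0 (v k)) + cw i = v (\<sigma> k)"
  shows "sign \<sigma> = (-1) ^ word_length \<alpha> {1..l} (wi \<circ> w0)"
proof -
  \<comment> \<open>Irreducibility and \<open>i \<in> J\<close> only serve to make \<open>\<sigma>\<close> exist, which is assumed here.\<close>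
  have "w0 \<in> parabolic \<alpha> {1..l}"
    using w0 weyl_group_subset_parabolic[OF rs red basis] by (auto simp: longest_in_def)
  moreover have "wi \<in> parabolic \<alpha> {1..l}"
    using wi parabolic_mono[of "{1..l} - {i}" "{1..l}" \<alpha>] by (auto simp: longest_in_def)
  ultimately have W: "wi \<circ> w0 \<in> parabolic \<alpha> {1..l}" by (simp add: parabolic_comp)
  obtain bs :: "'a list" where bs: "distinct bs" "set bs = Basis"
    using finite_distinct_list[OF finite_Basis] by blast
  have lbs: "length bs = l" using distinct_card[OF bs(1)] bs(2) dim by simp
  have vertices: "\<forall>c\<le>l. \<forall>k\<in>{1..l}. v c \<bullet> \<alpha> k = (if c = k then 1 / real (n k) else 0)"
    using vdef cow by auto
  have "\<forall>k\<in>{1..l}. 1 / real (n k) \<noteq> 0"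
    using highest_root_coeff_nonzero[OF basis hr hn] by simp
  note indep = chamber_vertices_affinely_independent[OF vertices this]
  have "signof \<sigma> = det (lin_mat bs (wi \<circ> w0))"
    using signof_affine_vertex_perm[OF bs linear_parabolic[OF W], of \<sigma> v "cw i"] \<sigma> \<sigma>v indep
    by (simp add: lbs atLeast0AtMost)
  also have "\<dots> = (-1) ^ word_length \<alpha> {1..l} (wi \<circ> w0)"
    using det_lin_mat_word_length[OF bs W] simple_root_nonzero[OF rs basis] by blast
  finally show ?thesis by (metis of_int_eq_iff of_int_minus of_int_1 of_int_power)
qed

end
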